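(* Let $r_V,r_A,a_1,a_2,b_1,b_2,c_V,c_A,K_{V,1},K_{V,2},K_{A,1},K_{A,2}>0$, $n>1$, $\mu_{V,1},\mu_{V,2},\mu_{A,1},\mu_{A,2}>0$, $d_{V,12},d_{V,21},d_{A,12},d_{A,21}>0$ and $\alpha_1,\alpha_2\in(0,1)$. For $i\ne j\in\{1,2\}$ put $d_{V,ij}'=d_{V,ij}\frac{\alpha_i^n}{\alpha_i^n+c_V^n}$, $d_{A,ij}'=d_{A,ij}\frac{\alpha_i^n}{\alpha_i^n+c_A^n}$, $K_{A,i}'=(1-\alpha_i)K_{A,i}$, and consider on $\mathbb{R}_+^4$ the system (for $i\ne j$) $$\begin{aligned} \dot V_i&=r_V\tfrac{A_i}{A_i+a_i}V_i\big(1-\tfrac{V_i}{K_{V,i}}\big)-d_{V,ij}'\tfrac{1}{1+b_iA_i}V_i+d_{V,ji}'\tfrac{1}{1+b_jA_j}V_j-\mu_{V,i}V_i,\\ \dot A_i&=r_AA_i\big(1-\tfrac{A_i}{K_{A,i}'}\big)-d_{A,ij}'A_i+d_{A,ji}'A_j-\mu_{A,i}A_i . \end{aligned}$$ Define $\mathcal{Q}_{0A,1}=\frac{r_A}{\mu_{A,1}+d_{A,12}'}$, $\mathcal{Q}_{0A,2}=\frac{r_A}{\mu_{A,2}+d_{A,21}'}$, $$\bar r_A=\tfrac{1}{2}(d_{A,12}'+\mu_{A,1}+d_{A,21}'+\mu_{A,2}),\quad \Delta_{r_A}=(d_{A,21}'-d_{A,12}'+\mu_{A,2}-\mu_{A,1})^2+4d_{A,21}'d_{A,12}',\quad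 r_{A,\min}=\bar r_A-\tfrac12\sqrt{\Delta_{r_A}}.$$ Then: 1. $E_{0000}=(0,0,0,0)$ is an equilibrium for all parameter values, and it is locally asymptotically stable (LAS) if $r_A<r_{A,\min}$. 2. If $\mathcal{Q}_{0A,1}\ge 1$ or $\mathcal{Q}_{0A,2}\ge 1$, there exists at least one equilibrium of the form $E_{0A_10A_2}=(0,A_{1,+},0,A_{2,+})$ with $A_{1,+},A_{2,+}>0$. Any such equilibrium is LAS if $B_1<0$ and $B_2>0$, where, with $j_{11}=r_V\frac{A_{1,+}}{A_{1,+}+a_1}-\frac{d_{V,12}'}{1+b_1A_{1,+}}-\mu_{V,1}$ and $j_{33}=r_V\frac{A_{2,+}}{A_{2,+}+a_2}-\frac{d_{V,21}'}{1+b_2A_{2,+}}-\mu_{V,2}$, $$B_1=j_{11}+j_{33},\qquad B_2=j_{11}j_{33}-\frac{d_{V,21}'}{1+b_2A_{2,+}}\cdot\frac{d_{V,12}'}{1+b_1A_{1,+}}.$$ 3. Suppose $\mathcal{Q}_{0A,1}\ge1$ or $\mathcal{Q}_{0A,2}\ge 1$, let $(A_{1,+},A_{2,+})$ with $A_{1,+},A_{2,+}>0$ be such that $(0,A_{1,+},0,A_{2,+})$ is an equilibrium, and set $$\mathcal{S}_{0V,1}=\frac{r_V\frac{A_{1,+}}{A_{1,+}+a_1}}{\frac{d_{V,12}'}{1+b_1A_{1,+}}+\mu_{V,1}},\qquad \mathcal{S}_{0V,2}=\frac{r_V\frac{A_{2,+}}{A_{2,+}+a_2}}{\frac{d_{V,21}'}{1+b_2A_{2,+}}+\mu_{V,2}}.$$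 If $\mathcal{S}_{0V,1}\ge1$ or $\mathcal{S}_{0V,2}\ge1$, there exists at least one coexistence equilibrium $E=(V_{1,+},A_{1,+},V_{2,+},A_{2,+})$ with all components positive. Such an equilibrium $E=(V_1,A_1,V_2,A_2)$ is LAS whenever $C_1>0$ and $C_2>0$, where $$J_{11}=-r_V\tfrac{A_1}{A_1+a_1}\tfrac{V_1}{K_{V,1}}-\tfrac{d_{V,21}'}{1+b_2A_2}\tfrac{V_2}{V_1},\quad J_{13}=\tfrac{d_{V,21}'}{1+b_2A_2},\quad J_{22}=-r_A\tfrac{A_1}{K_{A,1}'}-d_{A,21}'\tfrac{A_2}{A_1},\quad J_{24}=d_{A,21}',$$ $$J_{31}=\tfrac{d_{V,12}'}{1+b_1A_1},\quad J_{33}=-r_V\tfrac{A_2}{A_2+a_2}\tfrac{V_2}{K_{V,2}}-\tfrac{d_{V,12}'}{1+b_1A_1}\tfrac{V_1}{V_2},\quad J_{42}=d_{A,12}',\quad J_{44}=-r_A\tfrac{A_2}{K_{A,2}'}-d_{A,12}'\tfrac{A_1}{A_2},$$ $$P=-J_{42}J_{24}+J_{44}J_{33}+J_{44}J_{22}+J_{44}J_{11}-J_{31}J_{13}+J_{33}J_{22}+J_{33}J_{11}+J_{22}J_{11},$$ $$N=J_{42}J_{24}J_{33}+J_{42}J_{24}J_{11}+J_{44}J_{31}J_{13}-J_{44}J_{33}J_{22}-J_{44}J_{33}J_{11}-J_{44}J_{22}J_{11}+J_{31}J_{13}J_{22}-J_{33}J_{22}J_{11},$$ $$C_3=-J_{44}-J_{33}-J_{22}-J_{11},\qquad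 C_4=J_{42}J_{24}J_{31}J_{13}-J_{42}J_{24}J_{33}J_{11}-J_{44}J_{31}J_{13}J_{22}+J_{44}J_{33}J_{22}J_{11},$$ $$C_1=P-\frac{N}{C_3},\qquad C_2=N-\frac{C_3\,C_4}{C_1}.$$
   Context: This is a two-patch vector ($V_i$)–animal ($A_i$) model with two-way, anthropization-dependent migration; $\alpha_i$ is the anthropization level of patch $i$. LAS means locally asymptotically stable. *)

theory Defs
  imports "HOL-Analysis.Analysis"
begin

record params =
  rV :: real  rA :: real
  a1 :: real  a2 :: real  b1 :: real  b2 :: real
  cV :: real  cA :: real
  KV1 :: real  KV2 :: real  KA1 :: real  KA2 :: real
  hn :: real
  muV1 :: real  muV2 :: real  muA1 :: real  muA2 :: real
  dV12 :: real  dV21 :: real  dA12 :: real  dA21 :: real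
  al1 :: real  al2 :: real

definition dV12' :: "params \<Rightarrow> real" where
  "dV12' p = dV12 p * (al1 p powr hn p / (al1 p powr hn p + cV p powr hn p))"
definition dV21' :: "params \<Rightarrow> real" where
  "dV21' p = dV21 p * (al2 p powr hn p / (al2 p powr hn p + cV p powr hn p))"
definition dA12' :: "params \<Rightarrow> real" where
  "dA12' p = dA12 p * (al1 p powr hn p / (al1 p powr hn p + cA p powr hn p))"
definition dA21' :: "params \<Rightarrow> real" where
  "dA21' p = dA21 p * (al2 p powr hn p / (al2 p powr hn p + cA p powr hn p))"
definition KA1' :: "params \<Rightarrow> real" where "KA1' p = (1 - al1 p) * KA1 p"
definition KA2' :: "params \<Rightarrow> real" where "KA2' p = (1 - al2 p) * KA2 p"

definition field :: "params \<Rightarrow> real^4 \<Rightarrow> real^4" where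
  "field p x = (let V1 = x$1; A1 = x$2; V2 = x$3; A2 = x$4 in vector [
     rV p * (A1 / (A1 + a1 p)) * V1 * (1 - V1 / KV1 p)
       - dV12' p * (1 / (1 + b1 p * A1)) * V1 + dV21' p * (1 / (1 + b2 p * A2)) * V2 - muV1 p * V1,
     rA p * A1 * (1 - A1 / KA1' p) - dA12' p * A1 + dA21' p * A2 - muA1 p * A1,
     rV p * (A2 / (A2 + a2 p)) * V2 * (1 - V2 / KV2 p)
       - dV21' p * (1 / (1 + b2 p * A2)) * V2 + dV12' p * (1 / (1 + b1 p * A1)) * V1 - muV2 p * V2,
     rA p * A2 * (1 - A2 / KA2' p) - dA21' p * A2 + dA12' p * A1 - muA2 p * A2])"

definition st :: "real \<Rightarrow> real \<Rightarrow> real \<Rightarrow> real \<Rightarrow> real^4" where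
  "st V1 A1 V2 A2 = vector [V1, A1, V2, A2]"

definition is_solution_on :: "('a::real_normed_vector \<Rightarrow> 'a) \<Rightarrow> (real \<Rightarrow> 'a) \<Rightarrow> real \<Rightarrow> bool" where
  "is_solution_on f x T \<longleftrightarrow>
     (\<forall>t\<in>{0..T}. (x has_vector_derivative f (x t)) (at t within {0..T}))"

definition LAS :: "('a::real_normed_vector \<Rightarrow> 'a) \<Rightarrow> 'a \<Rightarrow> bool" where
  "LAS f e \<longleftrightarrow>
     (\<forall>\<epsilon>>0. \<exists>\<delta>>0. \<forall>x T. T \<ge> 0 \<and> is_solution_on f x T \<and> dist (x 0) e < \<delta> \<longrightarrow>
                          (\<forall>t\<in>{0..T}. dist (x t) e < \<epsilon>)) \<and>
     (\<exists>\<delta>>0. \<forall>x. (\<forall>T\<ge>0. is_solution_on f x T) \<and> dist (x 0) e < \<delta> \<longrightarrow> (x \<longlongrightarrow> e) at_top)"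

definition Q0A1 :: "params \<Rightarrow> real" where "Q0A1 p = rA p / (muA1 p + dA12' p)"
definition Q0A2 :: "params \<Rightarrow> real" where "Q0A2 p = rA p / (muA2 p + dA21' p)"
definition rAbar :: "params \<Rightarrow> real" where
  "rAbar p = (dA12' p + muA1 p + dA21' p + muA2 p) / 2"
definition DeltarA :: "params \<Rightarrow> real" where
  "DeltarA p = (dA21' p - dA12' p + muA2 p - muA1 p)^2 + 4 * dA21' p * dA12' p"
definition rAmin :: "params \<Rightarrow> real" where "rAmin p = rAbar p - sqrt (DeltarA p) / 2"

definition j11 :: "params \<Rightarrow> real \<Rightarrow> real" where
  "j11 p A1 = rV p * (A1 / (A1 + a1 p)) - dV12' p / (1 + b1 p * A1) - muV1 p"
definition j33 :: "params \<Rightarrow> real \<Rightarrow> real" where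
  "j33 p A2 = rV p * (A2 / (A2 + a2 p)) - dV21' p / (1 + b2 p * A2) - muV2 p"
definition B1 :: "params \<Rightarrow> real \<Rightarrow> real \<Rightarrow> real" where
  "B1 p A1 A2 = j11 p A1 + j33 p A2"
definition B2 :: "params \<Rightarrow> real \<Rightarrow> real \<Rightarrow> real" where
  "B2 p A1 A2 = j11 p A1 * j33 p A2 - (dV21' p / (1 + b2 p * A2)) * (dV12' p / (1 + b1 p * A1))"

definition S0V1 :: "params \<Rightarrow> real \<Rightarrow> real" where
  "S0V1 p A1 = (rV p * (A1 / (A1 + a1 p))) / (dV12' p / (1 + b1 p * A1) + muV1 p)"
definition S0V2 :: "params \<Rightarrow> real \<Rightarrow> real" where
  "S0V2 p A2 = (rV p * (A2 / (A2 + a2 p))) / (dV21' p / (1 + b2 p * A2) + muV2 p)"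

definition J11 where "J11 p V1 A1 V2 A2 =
  - rV p * (A1 / (A1 + a1 p)) * (V1 / KV1 p) - (dV21' p / (1 + b2 p * A2)) * (V2 / V1)"
definition J13 where "J13 p V1 A1 V2 A2 = dV21' p / (1 + b2 p * A2)"
definition J22 where "J22 p V1 A1 V2 A2 = - rA p * (A1 / KA1' p) - dA21' p * (A2 / A1)"
definition J24 where "J24 p V1 A1 V2 A2 = dA21' p"
definition J31 where "J31 p V1 A1 V2 A2 = dV12' p / (1 + b1 p * A1)"
definition J33 where "J33 p V1 A1 V2 A2 =
  - rV p * (A2 / (A2 + a2 p)) * (V2 / KV2 p) - (dV12' p / (1 + b1 p * A1)) * (V1 / V2)"
definition J42 where "J42 p V1 A1 V2 A2 = dA12' p"
definition J44 where "J44 p V1 A1 V2 A2 = - rA p * (A2 / KA2' p) - dA12' p * (A1 / A2)"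

definition Pc :: "params \<Rightarrow> real \<Rightarrow> real \<Rightarrow> real \<Rightarrow> real \<Rightarrow> real" where
  "Pc p V1 A1 V2 A2 = (let j11 = J11 p V1 A1 V2 A2; j13 = J13 p V1 A1 V2 A2;
     j22 = J22 p V1 A1 V2 A2; j24 = J24 p V1 A1 V2 A2; j31 = J31 p V1 A1 V2 A2;
     j33 = J33 p V1 A1 V2 A2; j42 = J42 p V1 A1 V2 A2; j44 = J44 p V1 A1 V2 A2 in
     - j42*j24 + j44*j33 + j44*j22 + j44*j11 - j31*j13 + j33*j22 + j33*j11 + j22*j11)"
definition Nc :: "params \<Rightarrow> real \<Rightarrow> real \<Rightarrow> real \<Rightarrow> real \<Rightarrow> real" where
  "Nc p V1 A1 V2 A2 = (let j11 = J11 p V1 A1 V2 A2; j13 = J13 p V1 A1 V2 A2;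
     j22 = J22 p V1 A1 V2 A2; j24 = J24 p V1 A1 V2 A2; j31 = J31 p V1 A1 V2 A2;
     j33 = J33 p V1 A1 V2 A2; j42 = J42 p V1 A1 V2 A2; j44 = J44 p V1 A1 V2 A2 in
     j42*j24*j33 + j42*j24*j11 + j44*j31*j13 - j44*j33*j22 - j44*j33*j11 - j44*j22*j11
     + j31*j13*j22 - j33*j22*j11)"
definition C3 :: "params \<Rightarrow> real \<Rightarrow> real \<Rightarrow> real \<Rightarrow> real \<Rightarrow> real" where
  "C3 p V1 A1 V2 A2 = - J44 p V1 A1 V2 A2 - J33 p V1 A1 V2 A2 - J22 p V1 A1 V2 A2 - J11 p V1 A1 V2 A2"
definition C4 :: "params \<Rightarrow> real \<Rightarrow> real \<Rightarrow> real \<Rightarrow> real \<Rightarrow> real" where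
  "C4 p V1 A1 V2 A2 = (let j11 = J11 p V1 A1 V2 A2; j13 = J13 p V1 A1 V2 A2;
     j22 = J22 p V1 A1 V2 A2; j24 = J24 p V1 A1 V2 A2; j31 = J31 p V1 A1 V2 A2;
     j33 = J33 p V1 A1 V2 A2; j42 = J42 p V1 A1 V2 A2; j44 = J44 p V1 A1 V2 A2 in
     j42*j24*j31*j13 - j42*j24*j33*j11 - j44*j31*j13*j22 + j44*j33*j22*j11)"
definition C1 :: "params \<Rightarrow> real \<Rightarrow> real \<Rightarrow> real \<Rightarrow> real \<Rightarrow> real" where
  "C1 p V1 A1 V2 A2 = Pc p V1 A1 V2 A2 - Nc p V1 A1 V2 A2 / C3 p V1 A1 V2 A2"
definition C2 :: "params \<Rightarrow> real \<Rightarrow> real \<Rightarrow> real \<Rightarrow> real \<Rightarrow> real" where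
  "C2 p V1 A1 V2 A2 = Nc p V1 A1 V2 A2 - C3 p V1 A1 V2 A2 * C4 p V1 A1 V2 A2 / C1 p V1 A1 V2 A2"

end

theory Submission
  imports Defs "HOL-Real_Asymp.Real_Asymp"
begin

(* Every equilibrium in question is shown LAS by linearisation, using a quadratic Lyapunov function
   with diagonal weights.  The animal equations do not involve the vectors, so the Jacobian is block
   triangular: a 2x2 vector block and a 2x2 animal block, both Metzler (migration gives positive
   off-diagonal entries).  A Metzler 2x2 block with negative trace and positive determinant has a
   diagonal weighting that makes its quadratic form negative definite, and weighting the animal block
   heavily absorbs the coupling from animals to vectors.  At the origin the block conditions amount to
   r_A < r_{A,min} (the vector block is always stable there); at E_{0A_10A_2} they are B_1 < 0 and
   B_2 > 0; at a positive equilibrium the equilibrium equations turn each diagonal entry into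
   -rho X / K - sigma Y / X, which makes both blocks stable unconditionally.  Existence of equilibria
   reduces, for each block, to a two-patch logistic system with migration, solved by the intermediate
   value theorem along the nullcline of the first patch. *)

section \<open>Lyapunov functions and linearisation\<close>

lemma stays_below_level:
  fixes \<phi> :: "real \<Rightarrow> real"
  assumes cont: "continuous_on {0..T} \<phi>" and start: "\<phi> 0 < L"
    and der: "\<And>s. 0 < s \<Longrightarrow> s < T \<Longrightarrow> \<phi> s < L \<Longrightarrow> \<exists>y. (\<phi> has_real_derivative y) (at s) \<and> y \<le> 0"
    and t: "t \<in> {0..T}"
  shows "\<phi> t < L"
proof (rule ccontr)
  define B where "B = {0..T} \<inter> \<phi> -` {L..}"
  assume "\<not> \<phi> t < L"
  then have "t \<in> B" using t by (simp add: B_def)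
  moreover have "compact B"
    unfolding B_def compact_eq_bounded_closed
    by (auto intro: continuous_closed_preimage [OF cont] bounded_Int)
  ultimately obtain t1 where t1: "t1 \<in> B" and first: "\<And>s. s \<in> B \<Longrightarrow> t1 \<le> s"
    using compact_attains_inf by (metis empty_iff)
  then have t1T: "0 \<le> t1" "t1 \<le> T" "L \<le> \<phi> t1" by (auto simp: B_def)
  have below: "\<phi> s < L" if "0 \<le> s" "s < t1" for s
    using first [of s] that t1T by (force simp: B_def)
  have "\<phi> t1 \<le> \<phi> 0"
  proof (rule DERIV_nonpos_imp_decreasing_open [OF \<open>0 \<le> t1\<close>])
    show "continuous_on {0..t1} \<phi>" using cont continuous_on_subset t1T by fastforce
  qed (use der below t1T in auto)
  then show False using start t1T by linarith
qed

lemma LAS_if_exponential_estimate: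
  fixes f :: "'a::real_normed_vector \<Rightarrow> 'a"
  assumes "\<delta> > 0" "C > 0" "a > 0"
    and estimate: "\<And>x T t. is_solution_on f x T \<Longrightarrow> t \<in> {0..T} \<Longrightarrow> dist (x 0) e < \<delta> \<Longrightarrow>
                     dist (x t) e \<le> C * dist (x 0) e * exp (- (a * t))"
  shows "LAS f e"
  unfolding LAS_def
proof (intro conjI allI impI)
  fix \<epsilon> :: real assume "\<epsilon> > 0"
  show "\<exists>\<delta>>0. \<forall>x T. T \<ge> 0 \<and> is_solution_on f x T \<and> dist (x 0) e < \<delta> \<longrightarrow>
                 (\<forall>t\<in>{0..T}. dist (x t) e < \<epsilon>)"
  proof (intro exI [of _ "min \<delta> (\<epsilon> / C)"] conjI allI impI ballI)
    show "min \<delta> (\<epsilon> / C) > 0" using assms \<open>\<epsilon> > 0\<close> by simp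
    fix x T t assume x: "T \<ge> 0 \<and> is_solution_on f x T \<and> dist (x 0) e < min \<delta> (\<epsilon> / C)"
      and t: "t \<in> {0..T}"
    then have "dist (x t) e \<le> C * dist (x 0) e * exp (- (a * t))"
      using t by (intro estimate) auto
    also have "\<dots> \<le> C * dist (x 0) e"
      using t assms by (intro mult_left_le) auto
    also have "\<dots> < C * (\<epsilon> / C)"
      using x assms by (intro mult_strict_left_mono) auto
    finally show "dist (x t) e < \<epsilon>" using assms by simp
  qed
next
  show "\<exists>\<delta>>0. \<forall>x. (\<forall>T\<ge>0. is_solution_on f x T) \<and> dist (x 0) e < \<delta> \<longrightarrow> (x \<longlongrightarrow> e) at_top"
  proof (intro exI [of _ \<delta>] conjI allI impI)
    fix x assume x: "(\<forall>T\<ge>0. is_solution_on f x T) \<and> dist (x 0) e < \<delta>"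
    have "((\<lambda>t. C * dist (x 0) e * exp (- (a * t))) \<longlongrightarrow> 0) at_top"
      using \<open>a > 0\<close> by real_asymp
    moreover have "\<forall>\<^sub>F t in at_top. norm (dist (x t) e) \<le> C * dist (x 0) e * exp (- (a * t))"
    proof (rule eventually_at_top_linorderI [of 0])
      fix t :: real assume "t \<ge> 0"
      then show "norm (dist (x t) e) \<le> C * dist (x 0) e * exp (- (a * t))"
        using estimate [of x t t] x by simp
    qed
    ultimately have "((\<lambda>t. dist (x t) e) \<longlongrightarrow> 0) at_top"
      by (rule Lim_null_comparison [rotated])
    then show "(x \<longlongrightarrow> e) at_top" by (rule tendsto_dist_iff [THEN iffD2])
  qed (use \<open>\<delta> > 0\<close> in simp)
qed

definition weighted_sq_dist :: "('n \<Rightarrow> real) \<Rightarrow> real^'n \<Rightarrow> real^'n \<Rightarrow> real" where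
  "weighted_sq_dist w x e = (\<Sum>i\<in>UNIV. w i * (x$i - e$i)^2)"

lemma dist_power2_cart: "dist (x::real^'n) e ^ 2 = (\<Sum>i\<in>UNIV. (x$i - e$i)^2)"
  by (simp add: dist_norm norm_vec_def L2_set_def sum_nonneg)

lemma weighted_sq_dist_ge:
  assumes "\<And>i. m \<le> w i"
  shows "m * dist x e ^ 2 \<le> weighted_sq_dist w x e"
  unfolding weighted_sq_dist_def dist_power2_cart sum_distrib_left
  by (rule sum_mono) (simp add: assms mult_right_mono)

lemma weighted_sq_dist_le:
  assumes "\<And>i. w i \<le> M"
  shows "weighted_sq_dist w x e \<le> M * dist x e ^ 2"
  unfolding weighted_sq_dist_def dist_power2_cart sum_distrib_left
  by (rule sum_mono) (simp add: assms mult_right_mono)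

lemma weighted_sq_dist_along_solution:
  assumes "is_solution_on f x T" and "t \<in> {0..T}"
  shows "((\<lambda>s. weighted_sq_dist w (x s) e) has_real_derivative
           2 * (\<Sum>i\<in>UNIV. w i * (x t $ i - e $ i) * f (x t) $ i)) (at t within {0..T})"
proof -
  have "(x has_vector_derivative f (x t)) (at t within {0..T})"
    using assms unfolding is_solution_on_def by blast
  then have "((\<lambda>s. x s $ i) has_real_derivative f (x t) $ i) (at t within {0..T})" for i
    using bounded_linear.has_vector_derivative [OF bounded_linear_vec_nth]
    by (fastforce simp: has_real_derivative_iff_has_vector_derivative)
  then have "((\<lambda>s. weighted_sq_dist w (x s) e) has_real_derivative
      (\<Sum>i\<in>UNIV. w i * (2 * (x t $ i - e $ i) * f (x t) $ i))) (at t within {0..T})"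
    unfolding weighted_sq_dist_def
    by (intro DERIV_sum DERIV_cmult) (auto intro!: derivative_eq_intros)
  then show ?thesis
    by (rule DERIV_cong) (simp add: sum_distrib_left algebra_simps)
qed

lemma weighted_sq_dist_dissipation:
  fixes f :: "real^'n \<Rightarrow> real^'n"
  assumes m: "m > 0" "\<And>i. m \<le> w i" and M: "\<And>i. w i \<le> M" and c: "c \<ge> 0" and r: "r > 0"
    and rate: "\<And>y. dist y e < r \<Longrightarrow>
                 (\<Sum>i\<in>UNIV. w i * (y$i - e$i) * f y $ i) \<le> - c * dist y e ^ 2"
    and small: "weighted_sq_dist w y e < m * r^2"
  shows "2 * (\<Sum>i\<in>UNIV. w i * (y$i - e$i) * f y $ i) + 2 * c / M * weighted_sq_dist w y e \<le> 0"
proof -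
  have "M > 0" using m(1) m(2) [of undefined] M [of undefined] by linarith
  have "m * dist y e ^ 2 < m * r^2"
    using weighted_sq_dist_ge [of m w, OF m(2)] small by (rule le_less_trans)
  then have "dist y e < r"
    using m r by (simp add: power_less_imp_less_base)
  then have "2 * (\<Sum>i\<in>UNIV. w i * (y$i - e$i) * f y $ i) \<le> - 2 * c * dist y e ^ 2"
    using rate by fastforce
  moreover have "2 * c / M * weighted_sq_dist w y e \<le> 2 * c / M * (M * dist y e ^ 2)"
    by (rule mult_left_mono [OF weighted_sq_dist_le [of w M, OF M]]) (use c \<open>M > 0\<close> in simp)
  ultimately show ?thesis
    using \<open>M > 0\<close> by simp
qed

(* As long as the weighted distance is below m r^2 the solution lies in the ball of radius r, where
   the dissipation inequality makes the left-hand side nonincreasing in t. *)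
lemma weighted_sq_dist_exponential_decay:
  fixes f :: "real^'n \<Rightarrow> real^'n"
  assumes m: "m > 0" "\<And>i. m \<le> w i" and M: "\<And>i. w i \<le> M" and c: "c \<ge> 0" and r: "r > 0"
    and rate: "\<And>y. dist y e < r \<Longrightarrow>
                 (\<Sum>i\<in>UNIV. w i * (y$i - e$i) * f y $ i) \<le> - c * dist y e ^ 2"
    and sol: "is_solution_on f x T" and start: "weighted_sq_dist w (x 0) e < m * r^2"
    and t: "t \<in> {0..T}"
  shows "weighted_sq_dist w (x t) e * exp (2 * c / M * t) \<le> weighted_sq_dist w (x 0) e"
proof -
  define W where "W s = weighted_sq_dist w (x s) e" for s
  define R where "R s = (\<Sum>i\<in>UNIV. w i * (x s $ i - e $ i) * f (x s) $ i)" for s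
  define k where "k = 2 * c / M"
  define \<phi> where "\<phi> s = W s * exp (k * s)" for s
  have "M > 0" using m(1) m(2) [of undefined] M [of undefined] by linarith
  have der: "(\<phi> has_real_derivative (2 * R s + k * W s) * exp (k * s)) (at s within {0..T})"
    if "s \<in> {0..T}" for s
    unfolding \<phi>_def W_def R_def
    by (rule DERIV_cong [OF DERIV_mult [OF weighted_sq_dist_along_solution [OF sol that]
          DERIV_chain' [OF DERIV_cmult_Id DERIV_exp, THEN has_field_derivative_at_within]]])
      (simp add: algebra_simps)
  then have cont: "continuous_on {0..T} \<phi>"
    by (meson DERIV_continuous continuous_on_eq_continuous_within)
  have below: "\<phi> t < L" if "\<phi> 0 < L" "L < m * r^2" for L
  proof (rule stays_below_level [OF cont \<open>\<phi> 0 < L\<close> _ t])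
    fix s assume s: "0 < s" "s < T" "\<phi> s < L"
    have "0 \<le> m * dist (x s) e ^ 2" using m by simp
    also have "\<dots> \<le> W s" unfolding W_def by (rule weighted_sq_dist_ge [of m w, OF m(2)])
    finally have "W s \<le> \<phi> s"
      unfolding \<phi>_def using mult_left_mono [of 1 "exp (k * s)" "W s"] k_def c s \<open>M > 0\<close> by simp
    then have "W s < m * r^2" using s(3) that(2) by linarith
    then have "2 * R s + k * W s \<le> 0"
      using weighted_sq_dist_dissipation [OF m M c r rate] unfolding W_def R_def k_def by blast
    then have "(2 * R s + k * W s) * exp (k * s) \<le> 0"
      by (simp add: mult_nonpos_nonneg)
    moreover have "at s within {0..T} = at s"
      using s by (intro at_within_interior) auto
    ultimately show "\<exists>y. (\<phi> has_real_derivative y) (at s) \<and> y \<le> 0"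
      using der [of s] s by auto
  qed
  have "\<phi> 0 < m * r^2"
    using start by (simp add: \<phi>_def W_def)
  then have "\<phi> t \<le> \<phi> 0"
    by (rule dense_ge_bounded) (meson below less_imp_le)
  then show ?thesis by (simp add: \<phi>_def W_def k_def)
qed

lemma weighted_Lyapunov_exponential_estimate:
  fixes f :: "real^'n \<Rightarrow> real^'n"
  assumes m: "m > 0" "\<And>i. m \<le> w i" and M: "\<And>i. w i \<le> M" and c: "c \<ge> 0" and r: "r > 0"
    and rate: "\<And>y. dist y e < r \<Longrightarrow>
                 (\<Sum>i\<in>UNIV. w i * (y$i - e$i) * f y $ i) \<le> - c * dist y e ^ 2"
    and sol: "is_solution_on f x T" and t: "t \<in> {0..T}"
    and start: "dist (x 0) e < r * sqrt (m / M)"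
  shows "dist (x t) e \<le> sqrt (M / m) * dist (x 0) e * exp (- (c / M * t))"
proof -
  have "M > 0" using m(1) m(2) [of undefined] M [of undefined] by linarith
  have "dist (x 0) e ^ 2 < (r * sqrt (m / M)) ^ 2"
    using start by (simp add: power_strict_mono)
  then have "M * dist (x 0) e ^ 2 < m * r ^ 2"
    using m \<open>M > 0\<close> by (simp add: power_mult_distrib field_simps)
  then have "weighted_sq_dist w (x 0) e < m * r^2"
    using weighted_sq_dist_le [of w M, OF M] by (rule le_less_trans [rotated])
  from weighted_sq_dist_exponential_decay [OF m M c r rate sol this t]
  have decay: "weighted_sq_dist w (x t) e * exp (2 * c / M * t) \<le> M * dist (x 0) e ^ 2"
    using weighted_sq_dist_le [of w M, OF M, of "x 0" e] by (rule order_trans)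
  have "m * dist (x t) e ^ 2 * exp (2 * c / M * t) \<le> weighted_sq_dist w (x t) e * exp (2 * c / M * t)"
    by (rule mult_right_mono [OF weighted_sq_dist_ge [of m w, OF m(2)]]) simp
  then have "m * dist (x t) e ^ 2 * exp (2 * c / M * t) \<le> M * dist (x 0) e ^ 2"
    using decay by (rule order_trans)
  then have "dist (x t) e ^ 2 * (m * exp (2 * c / M * t)) \<le> M * dist (x 0) e ^ 2"
    by (simp only: mult_ac)
  then have "dist (x t) e ^ 2 \<le> M * dist (x 0) e ^ 2 / (m * exp (2 * c / M * t))"
    using m by (intro pos_le_divide_eq [THEN iffD2]) simp_all
  also have "\<dots> = M / m * dist (x 0) e ^ 2 * exp (- (2 * c / M * t))"
    by (simp add: exp_minus field_simps)
  also have "exp (- (2 * c / M * t)) = exp (- (c / M * t)) ^ 2"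
    unfolding exp_double [symmetric] by (rule arg_cong [where f = exp]) (simp add: algebra_simps)
  also have "M / m * dist (x 0) e ^ 2 * exp (- (c / M * t)) ^ 2
      = (sqrt (M / m) * dist (x 0) e * exp (- (c / M * t))) ^ 2"
    using m \<open>M > 0\<close> by (simp add: power_mult_distrib)
  finally have "dist (x t) e ^ 2 \<le> (sqrt (M / m) * dist (x 0) e * exp (- (c / M * t))) ^ 2" .
  then show ?thesis
    by (rule power2_le_imp_le) (use m \<open>M > 0\<close> in simp)
qed

lemma LAS_if_weighted_Lyapunov:
  fixes f :: "real^'n \<Rightarrow> real^'n"
  assumes w: "\<And>i. w i > 0" and r: "r > 0" and c: "c > 0"
    and rate: "\<And>y. dist y e < r \<Longrightarrow>
                 (\<Sum>i\<in>UNIV. w i * (y$i - e$i) * f y $ i) \<le> - c * dist y e ^ 2"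
  shows "LAS f e"
proof -
  define m where "m = Min (range w)"
  define M where "M = Max (range w)"
  have m: "m > 0" "\<And>i. m \<le> w i" and M: "\<And>i. w i \<le> M"
    using w by (auto simp: m_def M_def)
  have "M > 0" using m(1) m(2) [of undefined] M [of undefined] by linarith
  show ?thesis
  proof (rule LAS_if_exponential_estimate)
    show "r * sqrt (m / M) > 0" "sqrt (M / m) > 0" "c / M > 0"
      using r m c \<open>M > 0\<close> by simp_all
  qed (use weighted_Lyapunov_exponential_estimate [OF m M less_imp_le [OF c] r rate] in auto)
qed

(* D J + J^T D is negative definite for the positive diagonal matrix D = diag w. *)
definition diagonally_stable :: "real^'n^'n \<Rightarrow> bool" where
  "diagonally_stable J \<longleftrightarrow> (\<exists>w c. (\<forall>i. w i > 0) \<and> c > 0 \<and>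
     (\<forall>y. (\<Sum>i\<in>UNIV. w i * y$i * (J *v y)$i) \<le> - c * norm y ^ 2))"

lemma LAS_if_linearization_diagonally_stable:
  fixes f :: "real^'n \<Rightarrow> real^'n"
  assumes der: "(f has_derivative (\<lambda>h. J *v h)) (at e)" and eq: "f e = 0"
    and J: "diagonally_stable J"
  shows "LAS f e"
proof -
  obtain w c where w: "\<And>i. w i > 0" and c: "c > 0"
    and neg: "\<And>y. (\<Sum>i\<in>UNIV. w i * y$i * (J *v y)$i) \<le> - c * norm y ^ 2"
    using J unfolding diagonally_stable_def by blast
  define S where "S = (\<Sum>i\<in>UNIV. w i)"
  have S: "S > 0" unfolding S_def using w by (simp add: sum_pos)
  then have "c / (2 * S) > 0" using c by simp
  then obtain r where r: "r > 0"
    and lin: "\<And>y. norm (y - e) < r \<Longrightarrow> norm (f y - J *v (y - e)) \<le> c / (2 * S) * norm (y - e)"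
    using der eq unfolding has_derivative_at_alt by (metis diff_zero)
  show ?thesis
  proof (rule LAS_if_weighted_Lyapunov [OF w r, of "c / 2"])
    fix x assume "dist x e < r"
    define y where "y = x - e"
    have rem: "norm (f x - J *v y) \<le> c / (2 * S) * norm y"
      using lin \<open>dist x e < r\<close> by (simp add: y_def dist_norm)
    have "w i * y$i * f x $ i \<le> w i * y$i * (J *v y)$i + w i * (c / (2 * S) * norm y ^ 2)" for i
    proof -
      have "y$i * (f x - J *v y)$i \<le> \<bar>y$i\<bar> * \<bar>(f x - J *v y)$i\<bar>"
        by (simp add: abs_mult [symmetric])
      also have "\<dots> \<le> norm y * (c / (2 * S) * norm y)"
        using component_le_norm_cart [of y i] component_le_norm_cart [of "f x - J *v y" i] rem
        by (intro mult_mono) auto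
      finally have "y$i * (f x - J *v y)$i \<le> c / (2 * S) * norm y ^ 2"
        by (simp add: power2_eq_square mult_ac)
      then show ?thesis
        using mult_left_mono [OF _ less_imp_le [OF w [of i]]] by (fastforce simp: algebra_simps)
    qed
    then have "(\<Sum>i\<in>UNIV. w i * y$i * f x $ i)
        \<le> (\<Sum>i\<in>UNIV. w i * y$i * (J *v y)$i) + S * (c / (2 * S) * norm y ^ 2)"
      unfolding S_def sum_distrib_right sum.distrib [symmetric] by (rule sum_mono)
    also have "\<dots> \<le> - c * norm y ^ 2 + c / 2 * norm y ^ 2"
      using neg [of y] S by simp
    finally show "(\<Sum>i\<in>UNIV. w i * (x$i - e$i) * f x $ i) \<le> - (c / 2) * dist x e ^ 2"
      by (simp add: y_def dist_norm)
  qed (use c in simp)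
qed

section \<open>Diagonal stability of block-triangular Metzler matrices\<close>

lemma quadratic_form_2_nonneg:
  fixes p q s u v :: real
  assumes "p \<ge> 0" "s \<ge> 0" "q^2 \<le> p * s"
  shows "p * u^2 + 2 * q * u * v + s * v^2 \<ge> 0"
proof (cases "p = 0")
  case True
  then show ?thesis using assms by simp
next
  case False
  then have "p > 0" using assms by simp
  have "p * (p * u^2 + 2 * q * u * v + s * v^2) = (p * u + q * v)^2 + (p * s - q^2) * v^2"
    by (simp add: power2_eq_square algebra_simps)
  also have "\<dots> \<ge> 0" using assms by simp
  finally show ?thesis using \<open>p > 0\<close> by (simp add: zero_le_mult_iff)
qed

(* m = det / |trace| is a lower bound for both eigenvalues of - ((p, q), (q, s)). *)
lemma quadratic_form_2_negative_definite:
  fixes p q s :: real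
  assumes p: "p < 0" and det: "q^2 < p * s"
  obtains m where "m > 0" "\<And>u v. p * u^2 + 2 * q * u * v + s * v^2 \<le> - m * (u^2 + v^2)"
proof
  have "p * s > 0" using det zero_le_power2 [of q] by linarith
  then have s: "s < 0" using p by (simp add: zero_less_mult_iff)
  define m where "m = (p * s - q^2) / - (p + s)"
  show "m > 0" unfolding m_def using det p s by simp
  have m_eq: "m * - (p + s) = p * s - q^2" unfolding m_def using p s by simp
  have pos: "- (p + s) > 0" using p s by simp
  have "m * - (p + s) \<le> - p * - (p + s)" "m * - (p + s) \<le> - s * - (p + s)"
    unfolding m_eq using zero_le_power2 [of q] zero_le_power2 [of p] zero_le_power2 [of s]
    by (simp_all add: power2_eq_square algebra_simps)
  then have m_le: "m \<le> - p" "m \<le> - s"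
    using mult_right_le_imp_le [OF _ pos] by blast+
  fix u v :: real
  have "(- p - m) * u^2 + 2 * (- q) * u * v + (- s - m) * v^2 \<ge> 0"
  proof (rule quadratic_form_2_nonneg)
    show "- p - m \<ge> 0" "- s - m \<ge> 0" using m_le by simp_all
    have "(- p - m) * (- s - m) = q^2 + m^2"
      using m_eq by (simp add: power2_eq_square algebra_simps)
    then show "(- q)^2 \<le> (- p - m) * (- s - m)" by simp
  qed
  then show "p * u^2 + 2 * q * u * v + s * v^2 \<le> - m * (u^2 + v^2)"
    by (simp add: algebra_simps)
qed

(* The 2x2 matrix ((a, b), (g, d)) is Metzler and Hurwitz stable (a < 0 and b g < a d force d < 0). *)
definition stable_Metzler_2 :: "real \<Rightarrow> real \<Rightarrow> real \<Rightarrow> real \<Rightarrow> bool" where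
  "stable_Metzler_2 a b g d \<longleftrightarrow> a < 0 \<and> b > 0 \<and> g > 0 \<and> b * g < a * d"

lemma stable_Metzler_2I:
  fixes a b g d :: real
  assumes "b > 0" "g > 0" "a + d < 0" "b * g < a * d"
  shows "stable_Metzler_2 a b g d"
proof -
  have "b * g > 0" using assms by simp
  then have "a * d > 0" using assms by linarith
  have "a < 0"
  proof (rule ccontr)
    assume "\<not> a < 0"
    moreover have "d < 0" using \<open>\<not> a < 0\<close> \<open>a + d < 0\<close> by linarith
    ultimately have "a * d \<le> 0" by (simp add: mult_nonneg_nonpos)
    then show False using \<open>a * d > 0\<close> by linarith
  qed
  then show ?thesis using assms by (simp add: stable_Metzler_2_def)
qed

lemma stable_Metzler_2_if_eigenvalues_negative:
  fixes a b g d :: real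
  assumes "b > 0" "g > 0" and "a + d + sqrt ((a - d)^2 + 4 * b * g) < 0"
  shows "stable_Metzler_2 a b g d"
proof (rule stable_Metzler_2I [OF assms(1,2)])
  define s where "s = sqrt ((a - d)^2 + 4 * b * g)"
  have "s \<ge> 0" using assms by (simp add: s_def)
  moreover have "a + d + s < 0" using assms by (simp add: s_def)
  ultimately show "a + d < 0" by linarith
  from \<open>a + d + s < 0\<close> have "s < - (a + d)" by linarith
  then have "s^2 < (a + d)^2"
    using \<open>s \<ge> 0\<close> by (metis power2_minus power_strict_mono zero_less_numeral)
  moreover have "s^2 = (a - d)^2 + 4 * b * g" using assms by (simp add: s_def)
  ultimately show "b * g < a * d" by (simp add: power2_eq_square algebra_simps)
qed

(* The weights (g, b) make diag(g, b) ((a, b), (g, d)) symmetric. *)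
lemma stable_Metzler_2_weighted_form:
  assumes "stable_Metzler_2 a b g d"
  obtains m where "m > 0"
    "\<And>u v. g * u * (a * u + b * v) + b * v * (g * u + d * v) \<le> - m * (u^2 + v^2)"
proof -
  from assms have a: "a < 0" and "b > 0" "g > 0" and det: "b * g < a * d"
    by (simp_all add: stable_Metzler_2_def)
  then have "g * b * (b * g) < g * b * (a * d)"
    by (intro mult_strict_left_mono) simp_all
  then have det': "(g * b)^2 < (g * a) * (b * d)"
    by (simp add: power2_eq_square mult_ac)
  have "g * a < 0" using a \<open>g > 0\<close> by (simp add: mult_pos_neg)
  obtain m where "m > 0"
    "\<And>u v. g * a * u^2 + 2 * (g * b) * u * v + b * d * v^2 \<le> - m * (u^2 + v^2)"
    using quadratic_form_2_negative_definite [OF \<open>g * a < 0\<close> det'] by blast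
  then show ?thesis
    by (intro that [of m]) (simp_all add: power2_eq_square algebra_simps)
qed

lemma mult_le_weighted_squares:
  fixes g a b t :: real
  assumes "t > 0"
  shows "g * a * b \<le> t * a^2 + g^2 / (4 * t) * b^2"
proof -
  have "0 \<le> (2 * t * a - g * b)^2" by simp
  then have "4 * t * (g * a * b) \<le> 4 * t * (t * a^2 + g^2 / (4 * t) * b^2)"
    using assms by (simp add: power2_eq_square algebra_simps)
  then show ?thesis using assms by simp
qed

lemma bilinear_le_squares:
  fixes t :: real
  assumes t: "t > 0"
  shows "g12 * y1 * y2 + g14 * y1 * y4 + g32 * y3 * y2 + g34 * y3 * y4
    \<le> 2 * t * (y1^2 + y3^2) + (g12^2 + g14^2 + g32^2 + g34^2) / (4 * t) * (y2^2 + y4^2)"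
proof -
  define G where "G = (g12^2 + g14^2 + g32^2 + g34^2) / (4 * t)"
  have "g12 * y1 * y2 + g14 * y1 * y4 + g32 * y3 * y2 + g34 * y3 * y4
      \<le> (t * y1^2 + g12^2 / (4 * t) * y2^2) + (t * y1^2 + g14^2 / (4 * t) * y4^2)
        + (t * y3^2 + g32^2 / (4 * t) * y2^2) + (t * y3^2 + g34^2 / (4 * t) * y4^2)"
    using mult_le_weighted_squares [OF t] by (intro add_mono) auto
  also have "\<dots> \<le> 2 * t * (y1^2 + y3^2) + G * (y2^2 + y4^2)"
  proof -
    have "(g12^2 + g32^2) / (4 * t) \<le> G" "(g14^2 + g34^2) / (4 * t) \<le> G"
      unfolding G_def using t by (simp_all add: divide_right_mono)
    then have "(g12^2 + g32^2) / (4 * t) * y2^2 \<le> G * y2^2"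
      "(g14^2 + g34^2) / (4 * t) * y4^2 \<le> G * y4^2"
      by (meson mult_right_mono zero_le_power2)+
    then show ?thesis
      by (simp add: add_divide_distrib algebra_simps)
  qed
  finally show ?thesis unfolding G_def .
qed

(* With the weights of the two 2x2 blocks, the animal block scaled by a large factor K absorbs
   the coupling of the vector rows to the animal coordinates. *)
lemma diagonally_stable_block_triangular:
  fixes J :: "real^4^4"
  assumes zero: "J$2$1 = 0" "J$2$3 = 0" "J$4$1 = 0" "J$4$3 = 0"
    and V: "stable_Metzler_2 (J$1$1) (J$1$3) (J$3$1) (J$3$3)"
    and A: "stable_Metzler_2 (J$2$2) (J$2$4) (J$4$2) (J$4$4)"
  shows "diagonally_stable J"
proof -
  obtain mV where mV: "mV > 0" and qV: "\<And>u v. J$3$1 * u * (J$1$1 * u + J$1$3 * v)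
      + J$1$3 * v * (J$3$1 * u + J$3$3 * v) \<le> - mV * (u^2 + v^2)"
    using stable_Metzler_2_weighted_form [OF V] by blast
  obtain mA where mA: "mA > 0" and qA: "\<And>u v. J$4$2 * u * (J$2$2 * u + J$2$4 * v)
      + J$2$4 * v * (J$4$2 * u + J$4$4 * v) \<le> - mA * (u^2 + v^2)"
    using stable_Metzler_2_weighted_form [OF A] by blast
  define g12 where "g12 = J$3$1 * J$1$2"
  define g14 where "g14 = J$3$1 * J$1$4"
  define g32 where "g32 = J$1$3 * J$3$2"
  define g34 where "g34 = J$1$3 * J$3$4"
  define G where "G = (g12^2 + g14^2 + g32^2 + g34^2) / mV"
  define K where "K = (G + 1) / mA"
  have "G \<ge> 0" unfolding G_def using mV by simp
  then have K: "K > 0" unfolding K_def using mA by simp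
  define w :: "4 \<Rightarrow> real" where "w = (\<lambda>i. if i = 1 then J$3$1 else if i = 3 then J$1$3
                                         else if i = 2 then K * J$4$2 else K * J$2$4)"
  define c where "c = min (mV / 2) 1"
  have "(\<Sum>i\<in>UNIV. w i * y$i * (J *v y)$i) \<le> - c * norm y ^ 2" for y
  proof -
    have "(\<Sum>i\<in>UNIV. w i * y$i * (J *v y)$i) =
       (J$3$1 * y$1 * (J$1$1 * y$1 + J$1$3 * y$3) + J$1$3 * y$3 * (J$3$1 * y$1 + J$3$3 * y$3))
       + K * (J$4$2 * y$2 * (J$2$2 * y$2 + J$2$4 * y$4) + J$2$4 * y$4 * (J$4$2 * y$2 + J$4$4 * y$4))
       + (g12 * y$1 * y$2 + g14 * y$1 * y$4 + g32 * y$3 * y$2 + g34 * y$3 * y$4)"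
      by (simp add: sum_4 w_def zero matrix_vector_mult_def g12_def g14_def g32_def g34_def
          algebra_simps)
    also have "\<dots> \<le> - mV * ((y$1)^2 + (y$3)^2) + K * (- mA * ((y$2)^2 + (y$4)^2))
        + (2 * (mV / 4) * ((y$1)^2 + (y$3)^2) + G * ((y$2)^2 + (y$4)^2))"
    proof (rule add_mono [OF add_mono])
      show "K * (J$4$2 * y$2 * (J$2$2 * y$2 + J$2$4 * y$4) + J$2$4 * y$4 * (J$4$2 * y$2 + J$4$4 * y$4))
          \<le> K * (- mA * ((y$2)^2 + (y$4)^2))"
        by (rule mult_left_mono [OF qA]) (use K in simp)
      show "g12 * y$1 * y$2 + g14 * y$1 * y$4 + g32 * y$3 * y$2 + g34 * y$3 * y$4
          \<le> 2 * (mV / 4) * ((y$1)^2 + (y$3)^2) + G * ((y$2)^2 + (y$4)^2)"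
        using bilinear_le_squares [of "mV / 4" g12 "y$1" "y$2" g14 "y$4" g32 "y$3" g34] mV
        by (simp add: G_def)
    qed (rule qV)
    also have "\<dots> = - (mV / 2) * ((y$1)^2 + (y$3)^2) - ((y$2)^2 + (y$4)^2)"
      unfolding K_def using mA by (simp add: field_simps)
    also have "\<dots> \<le> - c * norm y ^ 2"
    proof -
      have "c * ((y$1)^2 + (y$3)^2) \<le> mV / 2 * ((y$1)^2 + (y$3)^2)"
        "c * ((y$2)^2 + (y$4)^2) \<le> 1 * ((y$2)^2 + (y$4)^2)"
        unfolding c_def by (rule mult_right_mono; simp)+
      then show ?thesis
        by (simp add: norm_vec_def L2_set_def sum_nonneg sum_4 algebra_simps)
    qed
    finally show ?thesis .
  qed
  moreover have "\<forall>i. w i > 0"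
    unfolding forall_4 w_def using V A K by (simp add: stable_Metzler_2_def)
  moreover have "c > 0" using mV by (simp add: c_def)
  ultimately show ?thesis
    unfolding diagonally_stable_def by blast
qed

section \<open>Two logistic patches coupled by migration\<close>

(* Patch X of a two-patch logistic population: intrinsic rate rho, capacity K, per-capita loss
   delta (death and emigration), immigration sigma Y from the other patch. *)
definition patch_rate :: "real \<Rightarrow> real \<Rightarrow> real \<Rightarrow> real \<Rightarrow> real \<Rightarrow> real \<Rightarrow> real" where
  "patch_rate \<rho> K \<delta> \<sigma> X Y = \<rho> * X * (1 - X / K) - \<delta> * X + \<sigma> * Y"

lemma patch_rate_0 [simp]: "patch_rate \<rho> K \<delta> \<sigma> 0 0 = 0"
  by (simp add: patch_rate_def)

(* Y = X l(X) solves the first equation; the second then reads X Gamma(X) = 0, and Gamma is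
   positive just right of X0, where l vanishes, and nonpositive at the large point b. *)
lemma patch_equilibrium_exists:
  fixes \<rho>1 \<rho>2 K1 K2 \<delta>1 \<delta>2 \<sigma>1 \<sigma>2 :: real
  assumes "\<rho>1 > 0" "\<rho>2 > 0" "K1 > 0" "K2 > 0" "\<sigma>1 > 0" "\<sigma>2 > 0" and "\<delta>1 \<le> \<rho>1"
  obtains X Y where "X > 0" "Y > 0"
    "patch_rate \<rho>1 K1 \<delta>1 \<sigma>2 X Y = 0" "patch_rate \<rho>2 K2 \<delta>2 \<sigma>1 Y X = 0"
proof -
  define l where "l X = (\<delta>1 - \<rho>1 + \<rho>1 * X / K1) / \<sigma>2" for X
  define \<Gamma> where "\<Gamma> X = \<sigma>1 + l X * (\<rho>2 - \<delta>2 - \<rho>2 * X * l X / K2)" for X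
  define X0 where "X0 = K1 * (\<rho>1 - \<delta>1) / \<rho>1"
  have X0: "X0 \<ge> 0" unfolding X0_def using assms by simp
  have l_pos: "l X > 0" if "X > X0" for X
  proof -
    have "\<rho>1 * X / K1 > \<rho>1 * X0 / K1" using that assms by (simp add: divide_strict_right_mono)
    moreover have "\<rho>1 * X0 / K1 = \<rho>1 - \<delta>1" unfolding X0_def using assms by simp
    ultimately show ?thesis unfolding l_def using assms by simp
  qed
  have cont: "isCont \<Gamma> X" for X
    unfolding \<Gamma>_def l_def using assms by (intro continuous_intros) auto
  have "\<Gamma> X0 = \<sigma>1"
    unfolding \<Gamma>_def l_def X0_def using assms by simp
  then have "\<forall>\<^sub>F X in at X0. \<Gamma> X > 0"
    using order_tendstoD(1) [OF cont [of X0, unfolded isCont_def], of 0] assms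
    by (simp add: eventually_at_filter)
  then obtain d where d: "d > 0" and \<Gamma>_pos: "\<And>X. X \<noteq> X0 \<Longrightarrow> dist X X0 < d \<Longrightarrow> \<Gamma> X > 0"
    unfolding eventually_at by blast
  define a where "a = X0 + d / 2"
  have a: "a > X0" "\<Gamma> a > 0" using d \<Gamma>_pos [of a] unfolding a_def by (auto simp: dist_real_def)
  define b where "b = max (a + 1) (max (K1 * (\<sigma>2 + \<rho>1 - \<delta>1) / \<rho>1) (K2 * (\<bar>\<rho>2 - \<delta>2\<bar> + \<sigma>1 + 1) / \<rho>2))"
  have "a \<le> b" unfolding b_def by simp
  have "\<Gamma> b \<le> 0"
  proof -
    have "b \<ge> K1 * (\<sigma>2 + \<rho>1 - \<delta>1) / \<rho>1" unfolding b_def by simp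
    then have lb: "l b \<ge> 1" unfolding l_def using assms by (simp add: field_simps)
    have "b \<ge> K2 * (\<bar>\<rho>2 - \<delta>2\<bar> + \<sigma>1 + 1) / \<rho>2" unfolding b_def by simp
    then have bb: "\<rho>2 * b / K2 \<ge> \<bar>\<rho>2 - \<delta>2\<bar> + \<sigma>1 + 1" using assms by (simp add: field_simps)
    have "b > 0" using \<open>a \<le> b\<close> a X0 by linarith
    then have "\<rho>2 * b / K2 \<le> \<rho>2 * b / K2 * l b"
      using mult_left_mono [OF lb, of "\<rho>2 * b / K2"] assms by simp
    then have "\<rho>2 - \<delta>2 - \<rho>2 * b * l b / K2 \<le> - (\<sigma>1 + 1)" using bb by (simp add: mult_ac)
    then have "l b * (\<rho>2 - \<delta>2 - \<rho>2 * b * l b / K2) \<le> l b * - (\<sigma>1 + 1)"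
      using lb by (intro mult_left_mono) auto
    also have "\<dots> \<le> - (\<sigma>1 + 1)" using lb assms by (simp add: mult_le_cancel_right1)
    finally show ?thesis unfolding \<Gamma>_def by simp
  qed
  obtain X where X: "a \<le> X" "X \<le> b" "\<Gamma> X = 0"
    using IVT2 [of \<Gamma> b 0 a] \<open>\<Gamma> b \<le> 0\<close> a \<open>a \<le> b\<close> cont by fastforce
  then have "X > X0" using a by simp
  then have "X > 0" "X * l X > 0" using X0 l_pos by simp_all
  moreover have "patch_rate \<rho>1 K1 \<delta>1 \<sigma>2 X (X * l X) = 0"
    unfolding patch_rate_def l_def using assms by (simp add: field_simps)
  moreover have "patch_rate \<rho>2 K2 \<delta>2 \<sigma>1 (X * l X) X = X * \<Gamma> X"
    unfolding patch_rate_def \<Gamma>_def using assms by (simp add: field_simps)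
  ultimately show ?thesis using that X by simp
qed

lemma patch_equilibrium_stable:
  fixes \<rho>1 \<rho>2 K1 K2 \<delta>1 \<delta>2 \<sigma>1 \<sigma>2 X Y :: real
  assumes "\<rho>1 > 0" "\<rho>2 > 0" "K1 > 0" "K2 > 0" "\<sigma>1 > 0" "\<sigma>2 > 0" and "X > 0" "Y > 0"
    and eq1: "patch_rate \<rho>1 K1 \<delta>1 \<sigma>2 X Y = 0" and eq2: "patch_rate \<rho>2 K2 \<delta>2 \<sigma>1 Y X = 0"
  shows "stable_Metzler_2 (\<rho>1 * (1 - 2 * X / K1) - \<delta>1) \<sigma>2 \<sigma>1 (\<rho>2 * (1 - 2 * Y / K2) - \<delta>2)"
proof -
  define u where "u = \<rho>1 * X / K1"
  define v where "v = \<rho>2 * Y / K2"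
  have "u > 0" "v > 0" using assms by (simp_all add: u_def v_def)
  have diag1: "\<rho>1 * (1 - 2 * X / K1) - \<delta>1 = - u - \<sigma>2 * (Y / X)"
    using eq1 \<open>X > 0\<close> unfolding patch_rate_def u_def by (simp add: field_simps)
  have diag2: "\<rho>2 * (1 - 2 * Y / K2) - \<delta>2 = - v - \<sigma>1 * (X / Y)"
    using eq2 \<open>Y > 0\<close> unfolding patch_rate_def v_def by (simp add: field_simps)
  have cross: "\<sigma>2 * (Y / X) > 0" "\<sigma>1 * (X / Y) > 0" using assms by simp_all
  have "(- u - \<sigma>2 * (Y / X)) * (- v - \<sigma>1 * (X / Y))
      = \<sigma>2 * \<sigma>1 + (u * v + u * (\<sigma>1 * (X / Y)) + v * (\<sigma>2 * (Y / X)))"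
    using assms by (simp add: field_simps)
  moreover have "u * v + u * (\<sigma>1 * (X / Y)) + v * (\<sigma>2 * (Y / X)) > 0"
    using \<open>u > 0\<close> \<open>v > 0\<close> cross by (metis add_pos_pos mult_pos_pos)
  ultimately have "\<sigma>2 * \<sigma>1 < (- u - \<sigma>2 * (Y / X)) * (- v - \<sigma>1 * (X / Y))"
    by linarith
  moreover have "(- u - \<sigma>2 * (Y / X)) + (- v - \<sigma>1 * (X / Y)) < 0"
    using \<open>u > 0\<close> \<open>v > 0\<close> cross by linarith
  ultimately show ?thesis
    unfolding diag1 diag2 using assms by (intro stable_Metzler_2I) simp_all
qed

section \<open>The vector--animal model\<close>

lemma vector_4 [simp]:
  "(vector [x, y, z, w] :: ('a::zero)^4) $ 1 = x"
  "(vector [x, y, z, w] :: ('a::zero)^4) $ 2 = y"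
  "(vector [x, y, z, w] :: ('a::zero)^4) $ 3 = z"
  "(vector [x, y, z, w] :: ('a::zero)^4) $ 4 = w"
  unfolding vector_def by simp_all

lemma st_nth [simp]:
  "st V1 A1 V2 A2 $ 1 = V1" "st V1 A1 V2 A2 $ 2 = A1" "st V1 A1 V2 A2 $ 3 = V2" "st V1 A1 V2 A2 $ 4 = A2"
  by (simp_all add: st_def)

definition saturation :: "real \<Rightarrow> real \<Rightarrow> real" where
  "saturation a u = u / (u + a)"

definition inhibition :: "real \<Rightarrow> real \<Rightarrow> real" where
  "inhibition b u = 1 / (1 + b * u)"

lemma saturation_pos: "a > 0 \<Longrightarrow> u > 0 \<Longrightarrow> saturation a u > 0"
  by (simp add: saturation_def)

lemma inhibition_pos: "b > 0 \<Longrightarrow> u \<ge> 0 \<Longrightarrow> inhibition b u > 0"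
  by (simp add: inhibition_def add_pos_nonneg)

lemma saturation_0 [simp]: "saturation a 0 = 0" and inhibition_0 [simp]: "inhibition b 0 = 1"
  by (simp_all add: saturation_def inhibition_def)

lemma has_derivative_saturation_nth:
  assumes "x0 $ k + a \<noteq> 0"
  shows "((\<lambda>x::real^'n. saturation a (x $ k)) has_derivative (\<lambda>h. a / (x0 $ k + a)^2 * h $ k)) (at x0)"
proof -
  have "(saturation a has_real_derivative a / (x0 $ k + a)^2) (at (x0 $ k))"
    unfolding saturation_def using assms
    by (auto intro!: derivative_eq_intros simp: field_simps power2_eq_square)
  from has_derivative_compose [OF bounded_linear_imp_has_derivative [OF bounded_linear_vec_nth]
      this [unfolded has_field_derivative_def]]
  show ?thesis by simp
qed

lemma has_derivative_inhibition_nth: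
  assumes "1 + b * x0 $ k \<noteq> 0"
  shows "((\<lambda>x::real^'n. inhibition b (x $ k)) has_derivative (\<lambda>h. - b / (1 + b * x0 $ k)^2 * h $ k)) (at x0)"
proof -
  have "(inhibition b has_real_derivative - b / (1 + b * x0 $ k)^2) (at (x0 $ k))"
    unfolding inhibition_def using assms
    by (auto intro!: derivative_eq_intros simp: field_simps power2_eq_square)
  from has_derivative_compose [OF bounded_linear_imp_has_derivative [OF bounded_linear_vec_nth]
      this [unfolded has_field_derivative_def]]
  show ?thesis by simp
qed

lemma has_derivative_vec_componentwise:
  fixes f :: "'a::real_normed_vector \<Rightarrow> real^'n"
  assumes "\<And>i. ((\<lambda>x. f x $ i) has_derivative (\<lambda>h. f' h $ i)) (at a within S)"
  shows "(f has_derivative f') (at a within S)"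
proof (subst has_derivative_componentwise_within, intro ballI)
  fix b :: "real^'n" assume "b \<in> Basis"
  then obtain i where b: "b = axis i 1" by (auto simp: Basis_vec_def)
  show "((\<lambda>x. f x \<bullet> b) has_derivative (\<lambda>x. f' x \<bullet> b)) (at a within S)"
    unfolding b cart_eq_inner_axis [symmetric] by (rule assms)
qed

lemma field_nth:
  "field p x $ 1 = rV p * saturation (a1 p) (x$2) * x$1 * (1 - x$1 / KV1 p)
     - dV12' p * inhibition (b1 p) (x$2) * x$1 + dV21' p * inhibition (b2 p) (x$4) * x$3 - muV1 p * x$1"
  "field p x $ 2 = rA p * x$2 * (1 - x$2 / KA1' p) - dA12' p * x$2 + dA21' p * x$4 - muA1 p * x$2"
  "field p x $ 3 = rV p * saturation (a2 p) (x$4) * x$3 * (1 - x$3 / KV2 p)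
     - dV21' p * inhibition (b2 p) (x$4) * x$3 + dV12' p * inhibition (b1 p) (x$2) * x$1 - muV2 p * x$3"
  "field p x $ 4 = rA p * x$4 * (1 - x$4 / KA2' p) - dA21' p * x$4 + dA12' p * x$2 - muA2 p * x$4"
  by (simp_all add: field_def Let_def saturation_def inhibition_def)

lemma field_eq_0_iff:
  "field p (st V1 A1 V2 A2) = 0 \<longleftrightarrow>
     patch_rate (rV p * saturation (a1 p) A1) (KV1 p) (dV12' p * inhibition (b1 p) A1 + muV1 p)
       (dV21' p * inhibition (b2 p) A2) V1 V2 = 0
   \<and> patch_rate (rA p) (KA1' p) (dA12' p + muA1 p) (dA21' p) A1 A2 = 0
   \<and> patch_rate (rV p * saturation (a2 p) A2) (KV2 p) (dV21' p * inhibition (b2 p) A2 + muV2 p)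
       (dV12' p * inhibition (b1 p) A1) V2 V1 = 0
   \<and> patch_rate (rA p) (KA2' p) (dA21' p + muA2 p) (dA12' p) A2 A1 = 0"
  by (simp add: vec_eq_iff forall_4 field_nth patch_rate_def algebra_simps)

(* The diagonal entries of the vector rows are written as rho (1 - 2 X / K) - delta, the
   X-derivative of the corresponding patch_rate. *)
definition field_jacobian :: "params \<Rightarrow> real \<Rightarrow> real \<Rightarrow> real \<Rightarrow> real \<Rightarrow> real^4^4" where
  "field_jacobian p V1 A1 V2 A2 = vector [
     vector [rV p * saturation (a1 p) A1 * (1 - 2 * V1 / KV1 p) - (dV12' p * inhibition (b1 p) A1 + muV1 p),
             rV p * (a1 p / (A1 + a1 p)^2) * V1 * (1 - V1 / KV1 p) + dV12' p * (b1 p / (1 + b1 p * A1)^2) * V1,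
             dV21' p * inhibition (b2 p) A2,
             - dV21' p * (b2 p / (1 + b2 p * A2)^2) * V2],
     vector [0, rA p * (1 - 2 * A1 / KA1' p) - (dA12' p + muA1 p), 0, dA21' p],
     vector [dV12' p * inhibition (b1 p) A1,
             - dV12' p * (b1 p / (1 + b1 p * A1)^2) * V1,
             rV p * saturation (a2 p) A2 * (1 - 2 * V2 / KV2 p) - (dV21' p * inhibition (b2 p) A2 + muV2 p),
             rV p * (a2 p / (A2 + a2 p)^2) * V2 * (1 - V2 / KV2 p) + dV21' p * (b2 p / (1 + b2 p * A2)^2) * V2],
     vector [0, dA12' p, 0, rA p * (1 - 2 * A2 / KA2' p) - (dA21' p + muA2 p)]]"

lemma has_derivative_field:
  assumes "A1 + a1 p \<noteq> 0" "1 + b1 p * A1 \<noteq> 0" "A2 + a2 p \<noteq> 0" "1 + b2 p * A2 \<noteq> 0"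
    "KV1 p \<noteq> 0" "KV2 p \<noteq> 0" "KA1' p \<noteq> 0" "KA2' p \<noteq> 0"
  shows "(field p has_derivative (\<lambda>h. field_jacobian p V1 A1 V2 A2 *v h)) (at (st V1 A1 V2 A2))"
proof (rule has_derivative_vec_componentwise)
  note rational =
    has_derivative_saturation_nth [of "st V1 A1 V2 A2" 2 "a1 p"]
    has_derivative_saturation_nth [of "st V1 A1 V2 A2" 4 "a2 p"]
    has_derivative_inhibition_nth [of "b1 p" "st V1 A1 V2 A2" 2]
    has_derivative_inhibition_nth [of "b2 p" "st V1 A1 V2 A2" 4]
    bounded_linear_imp_has_derivative [OF bounded_linear_vec_nth]
  have "\<forall>i. ((\<lambda>x. field p x $ i) has_derivative (\<lambda>h. (field_jacobian p V1 A1 V2 A2 *v h) $ i))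
      (at (st V1 A1 V2 A2))"
    unfolding forall_4 field_nth
    by (intro conjI; (rule derivative_eq_intros rational refl | simp add: assms)+; rule ext;
        simp add: matrix_vector_mult_def sum_4 field_jacobian_def assms;
        simp add: algebra_simps diff_divide_distrib add_divide_distrib)
  then show "((\<lambda>x. field p x $ i) has_derivative (\<lambda>h. (field_jacobian p V1 A1 V2 A2 *v h) $ i))
      (at (st V1 A1 V2 A2))" for i
    by blast
qed

locale positive_params =
  fixes p :: params
  assumes pos: "rV p > 0" "rA p > 0" "a1 p > 0" "a2 p > 0" "b1 p > 0" "b2 p > 0"
    "cV p > 0" "cA p > 0" "KV1 p > 0" "KV2 p > 0" "KA1 p > 0" "KA2 p > 0"
    and mu: "muV1 p > 0" "muV2 p > 0" "muA1 p > 0" "muA2 p > 0"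
    and d: "dV12 p > 0" "dV21 p > 0" "dA12 p > 0" "dA21 p > 0"
    and al: "0 < al1 p" "al1 p < 1" "0 < al2 p" "al2 p < 1"
begin

lemma migration_pos: "dV12' p > 0" "dV21' p > 0" "dA12' p > 0" "dA21' p > 0"
  using pos d al by (simp_all add: dV12'_def dV21'_def dA12'_def dA21'_def add_pos_pos)

lemma capacity_pos: "KA1' p > 0" "KA2' p > 0"
  using pos al by (simp_all add: KA1'_def KA2'_def)

lemma LAS_if_blocks_stable:
  fixes V1 A1 V2 A2 :: real
  defines "J \<equiv> field_jacobian p V1 A1 V2 A2"
  assumes "A1 \<ge> 0" "A2 \<ge> 0" and eq: "field p (st V1 A1 V2 A2) = 0"
    and V: "stable_Metzler_2 (J$1$1) (J$1$3) (J$3$1) (J$3$3)"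
    and A: "stable_Metzler_2 (J$2$2) (J$2$4) (J$4$2) (J$4$4)"
  shows "LAS (field p) (st V1 A1 V2 A2)"
proof (rule LAS_if_linearization_diagonally_stable [OF has_derivative_field eq])
  have "b1 p * A1 \<ge> 0" "b2 p * A2 \<ge> 0" using pos assms by simp_all
  then have "A1 + a1 p > 0" "1 + b1 p * A1 > 0" "A2 + a2 p > 0" "1 + b2 p * A2 > 0"
    using pos assms by linarith+
  then show "A1 + a1 p \<noteq> 0" "1 + b1 p * A1 \<noteq> 0" "A2 + a2 p \<noteq> 0" "1 + b2 p * A2 \<noteq> 0"
    "KV1 p \<noteq> 0" "KV2 p \<noteq> 0" "KA1' p \<noteq> 0" "KA2' p \<noteq> 0"
    using pos capacity_pos by auto
  show "diagonally_stable (field_jacobian p V1 A1 V2 A2)"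
    using V A unfolding J_def by (intro diagonally_stable_block_triangular) (simp_all add: field_jacobian_def)
qed

lemma animal_block_stable:
  fixes V1 A1 V2 A2 :: real
  defines "J \<equiv> field_jacobian p V1 A1 V2 A2"
  assumes "A1 > 0" "A2 > 0" and eq: "field p (st V1 A1 V2 A2) = 0"
  shows "stable_Metzler_2 (J$2$2) (J$2$4) (J$4$2) (J$4$4)"
  using patch_equilibrium_stable [of "rA p" "rA p" "KA1' p" "KA2' p" "dA12' p" "dA21' p" A1 A2]
    assms pos capacity_pos migration_pos eq
  unfolding J_def field_eq_0_iff by (simp add: field_jacobian_def)

lemma LAS_positive_equilibrium:
  assumes "V1 > 0" "A1 > 0" "V2 > 0" "A2 > 0" and eq: "field p (st V1 A1 V2 A2) = 0"
  shows "LAS (field p) (st V1 A1 V2 A2)"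
proof (rule LAS_if_blocks_stable [OF _ _ eq _ animal_block_stable [OF _ _ eq]])
  show "stable_Metzler_2 (field_jacobian p V1 A1 V2 A2 $ 1 $ 1) (field_jacobian p V1 A1 V2 A2 $ 1 $ 3)
     (field_jacobian p V1 A1 V2 A2 $ 3 $ 1) (field_jacobian p V1 A1 V2 A2 $ 3 $ 3)"
    using patch_equilibrium_stable [of "rV p * saturation (a1 p) A1" "rV p * saturation (a2 p) A2"
        "KV1 p" "KV2 p" "dV12' p * inhibition (b1 p) A1" "dV21' p * inhibition (b2 p) A2" V1 V2]
      assms pos migration_pos saturation_pos inhibition_pos eq
    unfolding field_eq_0_iff by (simp add: field_jacobian_def)
qed (use assms in auto)

lemma LAS_origin:
  assumes "rA p < rAmin p"
  shows "LAS (field p) (st 0 0 0 0)"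
proof (rule LAS_if_blocks_stable)
  show "field p (st 0 0 0 0) = 0" by (simp add: field_eq_0_iff)
  have "(- dV12' p - muV1 p) * (- dV21' p - muV2 p) - dV21' p * dV12' p
      = dV12' p * muV2 p + muV1 p * dV21' p + muV1 p * muV2 p"
    by (simp add: algebra_simps)
  also have "\<dots> > 0" using migration_pos mu by (simp add: add_pos_pos)
  finally show "stable_Metzler_2 (field_jacobian p 0 0 0 0 $ 1 $ 1) (field_jacobian p 0 0 0 0 $ 1 $ 3)
     (field_jacobian p 0 0 0 0 $ 3 $ 1) (field_jacobian p 0 0 0 0 $ 3 $ 3)"
    using migration_pos mu by (intro stable_Metzler_2I) (simp_all add: field_jacobian_def)
  define a where "a = rA p - (dA12' p + muA1 p)"
  define d where "d = rA p - (dA21' p + muA2 p)"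
  have "(a - d)^2 + 4 * dA21' p * dA12' p = DeltarA p"
    by (simp add: a_def d_def DeltarA_def algebra_simps)
  moreover have "a + d = 2 * (rA p - rAbar p)"
    by (simp add: a_def d_def rAbar_def algebra_simps)
  ultimately have "a + d + sqrt ((a - d)^2 + 4 * dA21' p * dA12' p) = 2 * (rA p - rAmin p)"
    by (simp add: rAmin_def algebra_simps)
  with assms have "a + d + sqrt ((a - d)^2 + 4 * dA21' p * dA12' p) < 0"
    by simp
  then show "stable_Metzler_2 (field_jacobian p 0 0 0 0 $ 2 $ 2) (field_jacobian p 0 0 0 0 $ 2 $ 4)
     (field_jacobian p 0 0 0 0 $ 4 $ 2) (field_jacobian p 0 0 0 0 $ 4 $ 4)"
    using migration_pos unfolding a_def d_def
    by (intro stable_Metzler_2_if_eigenvalues_negative) (simp_all add: field_jacobian_def)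
qed simp_all

lemma LAS_vector_free_equilibrium:
  assumes "A1 > 0" "A2 > 0" and eq: "field p (st 0 A1 0 A2) = 0"
    and "B1 p A1 A2 < 0" "B2 p A1 A2 > 0"
  shows "LAS (field p) (st 0 A1 0 A2)"
proof (rule LAS_if_blocks_stable [OF _ _ eq _ animal_block_stable [OF _ _ eq]])
  have "dV21' p / (1 + b2 p * A2) > 0" "dV12' p / (1 + b1 p * A1) > 0"
    using assms pos migration_pos by (simp_all add: add_pos_pos)
  moreover have "field_jacobian p 0 A1 0 A2 $ 1 $ 1 = j11 p A1" "field_jacobian p 0 A1 0 A2 $ 3 $ 3 = j33 p A2"
    "field_jacobian p 0 A1 0 A2 $ 1 $ 3 = dV21' p / (1 + b2 p * A2)"
    "field_jacobian p 0 A1 0 A2 $ 3 $ 1 = dV12' p / (1 + b1 p * A1)"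
    by (simp_all add: field_jacobian_def j11_def j33_def saturation_def inhibition_def)
  ultimately show "stable_Metzler_2 (field_jacobian p 0 A1 0 A2 $ 1 $ 1) (field_jacobian p 0 A1 0 A2 $ 1 $ 3)
     (field_jacobian p 0 A1 0 A2 $ 3 $ 1) (field_jacobian p 0 A1 0 A2 $ 3 $ 3)"
    using assms unfolding B1_def B2_def by (intro stable_Metzler_2I) (simp_all add: mult.commute)
qed (use assms in auto)

lemma vector_free_equilibrium_exists:
  assumes "Q0A1 p \<ge> 1 \<or> Q0A2 p \<ge> 1"
  obtains A1 A2 where "A1 > 0" "A2 > 0" "field p (st 0 A1 0 A2) = 0"
proof -
  have "muA1 p + dA12' p > 0" "muA2 p + dA21' p > 0" using mu migration_pos by simp_all
  with assms have "dA12' p + muA1 p \<le> rA p \<or> dA21' p + muA2 p \<le> rA p"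
    unfolding Q0A1_def Q0A2_def by (simp add: field_simps)
  then show ?thesis
  proof
    assume "dA12' p + muA1 p \<le> rA p"
    with patch_equilibrium_exists [of "rA p" "rA p" "KA1' p" "KA2' p" "dA12' p" "dA21' p"]
    obtain X Y where "X > 0" "Y > 0"
      "patch_rate (rA p) (KA1' p) (dA12' p + muA1 p) (dA21' p) X Y = 0"
      "patch_rate (rA p) (KA2' p) (dA21' p + muA2 p) (dA12' p) Y X = 0"
      using pos capacity_pos migration_pos by blast
    then show ?thesis by (intro that [of X Y]) (simp_all add: field_eq_0_iff)
  next
    assume "dA21' p + muA2 p \<le> rA p"
    with patch_equilibrium_exists [of "rA p" "rA p" "KA2' p" "KA1' p" "dA21' p" "dA12' p"]
    obtain X Y where "X > 0" "Y > 0"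
      "patch_rate (rA p) (KA2' p) (dA21' p + muA2 p) (dA12' p) X Y = 0"
      "patch_rate (rA p) (KA1' p) (dA12' p + muA1 p) (dA21' p) Y X = 0"
      using pos capacity_pos migration_pos by blast
    then show ?thesis by (intro that [of Y X]) (simp_all add: field_eq_0_iff)
  qed
qed

lemma positive_equilibrium_exists:
  assumes "A1 > 0" "A2 > 0" and eq: "field p (st 0 A1 0 A2) = 0"
    and "S0V1 p A1 \<ge> 1 \<or> S0V2 p A2 \<ge> 1"
  obtains V1 V2 where "V1 > 0" "V2 > 0" "field p (st V1 A1 V2 A2) = 0"
proof -
  define \<rho>1 where "\<rho>1 = rV p * saturation (a1 p) A1"
  define \<rho>2 where "\<rho>2 = rV p * saturation (a2 p) A2"
  define \<sigma>1 where "\<sigma>1 = dV12' p * inhibition (b1 p) A1"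
  define \<sigma>2 where "\<sigma>2 = dV21' p * inhibition (b2 p) A2"
  have pos': "\<rho>1 > 0" "\<rho>2 > 0" "\<sigma>1 > 0" "\<sigma>2 > 0"
    using assms pos migration_pos saturation_pos inhibition_pos
    by (simp_all add: \<rho>1_def \<rho>2_def \<sigma>1_def \<sigma>2_def)
  have "S0V1 p A1 = \<rho>1 / (\<sigma>1 + muV1 p)" "S0V2 p A2 = \<rho>2 / (\<sigma>2 + muV2 p)"
    by (simp_all add: S0V1_def S0V2_def \<rho>1_def \<rho>2_def \<sigma>1_def \<sigma>2_def saturation_def inhibition_def)
  with assms pos' mu have "\<sigma>1 + muV1 p \<le> \<rho>1 \<or> \<sigma>2 + muV2 p \<le> \<rho>2"
    by (simp add: field_simps add_pos_pos)
  then show ?thesis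
  proof
    assume "\<sigma>1 + muV1 p \<le> \<rho>1"
    with patch_equilibrium_exists [of \<rho>1 \<rho>2 "KV1 p" "KV2 p" \<sigma>1 \<sigma>2]
    obtain X Y where "X > 0" "Y > 0"
      "patch_rate \<rho>1 (KV1 p) (\<sigma>1 + muV1 p) \<sigma>2 X Y = 0"
      "patch_rate \<rho>2 (KV2 p) (\<sigma>2 + muV2 p) \<sigma>1 Y X = 0"
      using pos pos' by blast
    then show ?thesis
      using eq by (intro that [of X Y]) (simp_all add: field_eq_0_iff \<rho>1_def \<rho>2_def \<sigma>1_def \<sigma>2_def)
  next
    assume "\<sigma>2 + muV2 p \<le> \<rho>2"
    with patch_equilibrium_exists [of \<rho>2 \<rho>1 "KV2 p" "KV1 p" \<sigma>2 \<sigma>1]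
    obtain X Y where "X > 0" "Y > 0"
      "patch_rate \<rho>2 (KV2 p) (\<sigma>2 + muV2 p) \<sigma>1 X Y = 0"
      "patch_rate \<rho>1 (KV1 p) (\<sigma>1 + muV1 p) \<sigma>2 Y X = 0"
      using pos pos' by blast
    then show ?thesis
      using eq by (intro that [of Y X]) (simp_all add: field_eq_0_iff \<rho>1_def \<rho>2_def \<sigma>1_def \<sigma>2_def)
  qed
qed

end

theorem theorem3:
  fixes p :: params
  assumes pos: "rV p > 0" "rA p > 0" "a1 p > 0" "a2 p > 0" "b1 p > 0" "b2 p > 0"
    "cV p > 0" "cA p > 0" "KV1 p > 0" "KV2 p > 0" "KA1 p > 0" "KA2 p > 0"
    and hn: "hn p > 1"
    and mu: "muV1 p > 0" "muV2 p > 0" "muA1 p > 0" "muA2 p > 0"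
    and d: "dV12 p > 0" "dV21 p > 0" "dA12 p > 0" "dA21 p > 0"
    and al: "0 < al1 p" "al1 p < 1" "0 < al2 p" "al2 p < 1"
  shows
    "(field p (st 0 0 0 0) = 0 \<and> (rA p < rAmin p \<longrightarrow> LAS (field p) (st 0 0 0 0)))
   \<and> ((Q0A1 p \<ge> 1 \<or> Q0A2 p \<ge> 1) \<longrightarrow>
        (\<exists>A1 A2. A1 > 0 \<and> A2 > 0 \<and> field p (st 0 A1 0 A2) = 0)
      \<and> (\<forall>A1 A2. A1 > 0 \<and> A2 > 0 \<and> field p (st 0 A1 0 A2) = 0
               \<and> B1 p A1 A2 < 0 \<and> B2 p A1 A2 > 0 \<longrightarrow> LAS (field p) (st 0 A1 0 A2)))
   \<and> (\<forall>A1p A2p. (Q0A1 p \<ge> 1 \<or> Q0A2 p \<ge> 1) \<and> A1p > 0 \<and> A2p > 0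
          \<and> field p (st 0 A1p 0 A2p) = 0 \<and> (S0V1 p A1p \<ge> 1 \<or> S0V2 p A2p \<ge> 1) \<longrightarrow>
        (\<exists>V1 V2. V1 > 0 \<and> V2 > 0 \<and> field p (st V1 A1p V2 A2p) = 0)
      \<and> (\<forall>V1 A1 V2 A2. V1 > 0 \<and> A1 > 0 \<and> V2 > 0 \<and> A2 > 0
            \<and> field p (st V1 A1 V2 A2) = 0
            \<and> C1 p V1 A1 V2 A2 > 0 \<and> C2 p V1 A1 V2 A2 > 0 \<longrightarrow> LAS (field p) (st V1 A1 V2 A2)))"
proof -
  interpret positive_params p
    using assms by unfold_locales
  show ?thesis
  proof (intro conjI impI allI)
    show "field p (st 0 0 0 0) = 0" by (simp add: field_eq_0_iff)
  next
    assume "rA p < rAmin p"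
    then show "LAS (field p) (st 0 0 0 0)" by (rule LAS_origin)
  next
    assume "Q0A1 p \<ge> 1 \<or> Q0A2 p \<ge> 1"
    then show "\<exists>A1 A2. A1 > 0 \<and> A2 > 0 \<and> field p (st 0 A1 0 A2) = 0"
      by (metis vector_free_equilibrium_exists)
  next
    fix A1 A2
    assume "A1 > 0 \<and> A2 > 0 \<and> field p (st 0 A1 0 A2) = 0 \<and> B1 p A1 A2 < 0 \<and> B2 p A1 A2 > 0"
    then show "LAS (field p) (st 0 A1 0 A2)" by (blast intro: LAS_vector_free_equilibrium)
  next
    fix A1p A2p
    assume "(Q0A1 p \<ge> 1 \<or> Q0A2 p \<ge> 1) \<and> A1p > 0 \<and> A2p > 0
      \<and> field p (st 0 A1p 0 A2p) = 0 \<and> (S0V1 p A1p \<ge> 1 \<or> S0V2 p A2p \<ge> 1)"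
    then show "\<exists>V1 V2. V1 > 0 \<and> V2 > 0 \<and> field p (st V1 A1p V2 A2p) = 0"
      by (metis positive_equilibrium_exists)
  next
    fix V1 A1 V2 A2
    assume "V1 > 0 \<and> A1 > 0 \<and> V2 > 0 \<and> A2 > 0 \<and> field p (st V1 A1 V2 A2) = 0
      \<and> C1 p V1 A1 V2 A2 > 0 \<and> C2 p V1 A1 V2 A2 > 0"
    then show "LAS (field p) (st V1 A1 V2 A2)" by (blast intro: LAS_positive_equilibrium)
  qed
qed

end
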